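(* Let $\mathcal I=\mathbb R^d$, $\mathcal T$ its unit sphere, $\mathcal G$ a compact Abelian group with normalized Haar measure $dg$ acting on $\mathcal I$ by a unitary representation, and $\mathcal G_0\subset\mathcal G$ measurable with $V=\int_{\mathcal G_0}dg>0$. Let $\bar\Psi(I):\mathcal G\times\mathcal T\to\mathcal P(\mathbb R)$, $\bar\Psi(I)(g,t)=(\rho_{I,g})^t$, where $\rho_{I,\bar g}(A)=\frac1V\int_{\{g\in\bar g\mathcal G_0:\ gI\in A\}}dg$ and $\rho^t$ is the pushforward of $\rho$ under $I\mapsto\langle I,t\rangle$. Let $\mathcal H$ be a real separable Hilbert space and $\Phi:\mathcal P(\mathbb R)\to\mathcal H$ an embedding, and define $J_\Phi(h)(g,t)=\Phi(h(g,t))$ for $h:\mathcal G\times\mathcal T\to\mathcal P(\mathbb R)$. Let $\bar Q=J_\Phi\circ\bar\Psi$, viewed as a map from $\mathcal I$ to $L^2(\mathcal G\times\mathcal T,\mathcal H)$. Then $\bar Q$ is covariant: $\bar Q(gI)=g\bar Q(I)$ for all $I\in\mathcal I$, $g\in\mathcal G$.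
   Context: $\mathcal P(\mathbb R)$ is the set of Borel probability measures on $\mathbb R$. $L^2(\mathcal G\times\mathcal T,\mathcal H)$ is the space of maps $h:\mathcal G\times\mathcal T\to\mathcal H$ with $\int\|h(g,t)\|^2\,dg\,du(t)<\infty$, $u$ the normalized uniform measure on $\mathcal T$. The action of $\tilde g\in\mathcal G$ on maps $h$ defined on $\mathcal G\times\mathcal T$ is $(\tilde gh)(g,t)=h(\tilde gg,t)$. *)

theory Defs
  imports "HOL-Analysis.Analysis" "HOL-Probability.Probability"
begin

text \<open>The compact Abelian group G is written additively (type class
  topological_ab_group_add); gbar + G0 is the translate of G0.\<close>

definition normalized_haar :: "('g::topological_ab_group_add) measure \<Rightarrow> bool" where
  "normalized_haar mu \<longleftrightarrow> prob_space mu \<and> sets mu = sets borel \<and>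
     (\<forall>g A. A \<in> sets borel \<longrightarrow> emeasure mu ((+) g ` A) = emeasure mu A)"

definition unitary_rep :: "('g::topological_ab_group_add \<Rightarrow> real^'d \<Rightarrow> real^'d) \<Rightarrow> bool" where
  "unitary_rep act \<longleftrightarrow>
     (\<forall>g. linear (act g) \<and> (\<forall>x. norm (act g x) = norm x)) \<and>
     act 0 = id \<and> (\<forall>g h. act (g + h) = act g \<circ> act h) \<and>
     continuous_on UNIV (\<lambda>p. act (fst p) (snd p))"

definition rho :: "'g measure \<Rightarrow> 'g set \<Rightarrow> ('g::topological_ab_group_add \<Rightarrow> real^'d \<Rightarrow> real^'d)
                   \<Rightarrow> real^'d \<Rightarrow> 'g \<Rightarrow> (real^'d) measure" where
  "rho mu G0 act I gbar =
     scale_measure (ennreal (1 / measure mu G0))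
       (distr (density mu (indicator ((+) gbar ` G0))) borel (\<lambda>g. act g I))"

definition proj_meas :: "(real^'d) measure \<Rightarrow> real^'d \<Rightarrow> real measure" where
  "proj_meas r t = distr r borel (\<lambda>x. x \<bullet> t)"

definition Psi_bar :: "'g measure \<Rightarrow> 'g set \<Rightarrow> ('g::topological_ab_group_add \<Rightarrow> real^'d \<Rightarrow> real^'d)
                   \<Rightarrow> real^'d \<Rightarrow> 'g \<times> (real^'d) \<Rightarrow> real measure" where
  "Psi_bar mu G0 act I = (\<lambda>(g, t). proj_meas (rho mu G0 act I g) t)"

definition J_Phi :: "(real measure \<Rightarrow> 'h) \<Rightarrow> ('a \<Rightarrow> real measure) \<Rightarrow> 'a \<Rightarrow> 'h" where
  "J_Phi Phi h = (\<lambda>x. Phi (h x))"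

definition Q_bar :: "'g measure \<Rightarrow> 'g set \<Rightarrow> ('g::topological_ab_group_add \<Rightarrow> real^'d \<Rightarrow> real^'d)
                   \<Rightarrow> (real measure \<Rightarrow> 'h) \<Rightarrow> real^'d \<Rightarrow> 'g \<times> (real^'d) \<Rightarrow> 'h" where
  "Q_bar mu G0 act Phi I = J_Phi Phi (Psi_bar mu G0 act I)"

definition map_act :: "'g::ab_group_add \<Rightarrow> ('g \<times> 'b \<Rightarrow> 'c) \<Rightarrow> 'g \<times> 'b \<Rightarrow> 'c" where
  "map_act gt h = (\<lambda>(g, t). h (gt + g, t))"

end

theory Submission
  imports Defs
begin

text \<open>Substituting \<open>h \<mapsto> h + g\<close> in the Haar integral defining \<open>\<rho>\<^bsub>gI,g'\<^esub>\<close> turns the window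
  \<open>g' + G\<^sub>0\<close> into \<open>g + g' + G\<^sub>0\<close> and the orbit map \<open>h \<mapsto> h(gI)\<close> into \<open>h \<mapsto> hI\<close>, so
  \<open>\<rho>\<^bsub>gI,g'\<^esub> = \<rho>\<^bsub>I,g+g'\<^esub>\<close>; covariance of \<open>Q\<close> follows pointwise.\<close>

lemma image_add_eq_vimage_diff:
  fixes c :: "'a::ab_group_add"
  shows "(+) c ` A = (\<lambda>x. x - c) -` A"
proof (intro equalityI subsetI)
  fix x assume "x \<in> (\<lambda>x. x - c) -` A"
  then show "x \<in> (+) c ` A"
    by (intro rev_image_eqI[of "x - c"]) (auto simp: algebra_simps)
qed (auto simp: algebra_simps)

lemma translate_in_sets_borel:
  fixes c :: "'a::topological_ab_group_add"
  assumes "A \<in> sets borel"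
  shows "(+) c ` A \<in> sets borel"
proof -
  have "(\<lambda>x::'a. x - c) \<in> borel_measurable borel"
    by (intro borel_measurable_continuous_onI continuous_intros)
  from measurable_sets[OF this assms] show ?thesis
    by (simp add: image_add_eq_vimage_diff)
qed

lemma add_right_measurable:
  fixes mu :: "'a::topological_ab_group_add measure"
  assumes "sets mu = sets borel"
  shows "(\<lambda>x. x + c) \<in> measurable mu mu"
proof -
  have "(\<lambda>x::'a. x + c) \<in> borel_measurable borel"
    by (intro borel_measurable_continuous_onI continuous_intros)
  then show ?thesis
    using measurable_cong_sets[OF assms assms] by simp
qed

lemma distr_add_right_eq:
  fixes mu :: "'a::topological_ab_group_add measure"
  assumes sets_mu: "sets mu = sets borel"
    and invariant: "\<And>g A. A \<in> sets borel \<Longrightarrow> emeasure mu ((+) g ` A) = emeasure mu A"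
  shows "distr mu mu (\<lambda>x. x + c) = mu"
proof (rule measure_eqI)
  have space_mu: "space mu = UNIV"
    using sets_eq_imp_space_eq[OF sets_mu] by simp
  have meas: "(\<lambda>x. x + c) \<in> measurable mu mu"
    using sets_mu by (rule add_right_measurable)
  fix A assume "A \<in> sets (distr mu mu (\<lambda>x. x + c))"
  then have A: "A \<in> sets mu" by simp
  have "(\<lambda>x. x + c) -` A \<inter> space mu = (+) (- c) ` A"
    unfolding image_add_eq_vimage_diff space_mu by simp
  then show "emeasure (distr mu mu (\<lambda>x. x + c)) A = emeasure mu A"
    using A sets_mu invariant[of A "- c"] by (simp add: emeasure_distr[OF meas A])
qed simp

lemma density_indicator_translate:
  fixes mu :: "'a::topological_ab_group_add measure"
  assumes sets_mu: "sets mu = sets borel"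
    and invariant: "\<And>g A. A \<in> sets borel \<Longrightarrow> emeasure mu ((+) g ` A) = emeasure mu A"
    and A: "A \<in> sets borel"
  shows "density mu (indicator ((+) (c + a) ` A))
       = distr (density mu (indicator ((+) a ` A))) mu (\<lambda>x. x + c)"
proof -
  have meas: "(\<lambda>x. x + c) \<in> measurable mu mu"
    using sets_mu by (rule add_right_measurable)
  have "indicator ((+) (c + a) ` A) \<in> borel_measurable mu"
    using translate_in_sets_borel[OF A] sets_mu by simp
  moreover have "(\<lambda>x. indicator ((+) (c + a) ` A) (x + c) :: ennreal) = indicator ((+) a ` A)"
    unfolding image_add_eq_vimage_diff by (rule ext) (simp add: indicator_def algebra_simps)
  ultimately have "density (distr mu mu (\<lambda>x. x + c)) (indicator ((+) (c + a) ` A))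
      = distr (density mu (indicator ((+) a ` A))) mu (\<lambda>x. x + c)"
    using density_distr[OF _ meas] by metis
  then show ?thesis
    by (simp add: distr_add_right_eq[OF sets_mu invariant])
qed

lemma unitary_rep_act_add:
  assumes "unitary_rep act"
  shows "act (h + g) x = act h (act g x)"
  using assms by (simp add: unitary_rep_def)

lemma unitary_rep_orbit_measurable:
  assumes "unitary_rep act"
  shows "(\<lambda>g. act g x) \<in> borel_measurable borel"
proof -
  have "continuous_on UNIV (\<lambda>p. act (fst p) (snd p))"
    using assms by (simp add: unitary_rep_def)
  then have "continuous_on UNIV ((\<lambda>p. act (fst p) (snd p)) \<circ> (\<lambda>g. (g, x)))"
    by (intro continuous_on_compose continuous_intros) (auto elim: continuous_on_subset)
  then show ?thesis
    by (intro borel_measurable_continuous_onI) (simp add: comp_def)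
qed

lemma rho_act:
  assumes "normalized_haar mu" and "unitary_rep act" and "G0 \<in> sets mu"
  shows "rho mu G0 act (act g I) g' = rho mu G0 act I (g + g')"
proof -
  have sets_mu: "sets mu = sets borel"
    and invariant: "\<And>g A. A \<in> sets borel \<Longrightarrow> emeasure mu ((+) g ` A) = emeasure mu A"
    using assms(1) by (auto simp: normalized_haar_def)
  have meas: "(\<lambda>x. x + g) \<in> measurable mu mu"
    using sets_mu by (rule add_right_measurable)
  have orbit: "(\<lambda>h. act h I) \<in> measurable mu borel"
    using measurable_cong_sets[OF sets_mu refl] unitary_rep_orbit_measurable[OF assms(2)] by blast
  have "distr (density mu (indicator ((+) (g + g') ` G0))) borel (\<lambda>h. act h I)
      = distr (density mu (indicator ((+) g' ` G0))) borel ((\<lambda>h. act h I) \<circ> (\<lambda>x. x + g))"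
    using assms(3) sets_mu meas orbit
    by (simp add: density_indicator_translate[OF sets_mu invariant] distr_distr)
  also have "(\<lambda>h. act h I) \<circ> (\<lambda>x. x + g) = (\<lambda>h. act h (act g I))"
    by (simp add: comp_def unitary_rep_act_add[OF assms(2)])
  finally show ?thesis
    by (simp add: rho_def)
qed

lemma Q_bar_act:
  assumes "normalized_haar mu" and "unitary_rep act" and "G0 \<in> sets mu"
  shows "Q_bar mu G0 act Phi (act g I) = map_act g (Q_bar mu G0 act Phi I)"
  by (auto simp: Q_bar_def J_Phi_def Psi_bar_def map_act_def rho_act[OF assms])

theorem theorem10:
  fixes mu :: "('g::{topological_ab_group_add, t2_space}) measure"
    and G0 :: "'g set"
    and act :: "'g \<Rightarrow> real^'d \<Rightarrow> real^'d"
    and Phi :: "real measure \<Rightarrow> 'h::{real_inner, complete_space, second_countable_topology}"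
  assumes "compact (UNIV :: 'g set)"
    and "normalized_haar mu"
    and "unitary_rep act"
    and "G0 \<in> sets mu"
    and "measure mu G0 > 0"
    and "inj_on Phi {P. prob_space P \<and> sets P = sets (borel :: real measure)}"
  shows "\<forall>I g g'. \<forall>t \<in> sphere 0 1.
           Q_bar mu G0 act Phi (act g I) (g', t) = map_act g (Q_bar mu G0 act Phi I) (g', t)"
  by (intro allI ballI) (simp only: Q_bar_act[OF assms(2-4)])

end
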